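(* Let $k\ge1$ and $n$ be integers. Any two cycles of $G(n,k)$ are contiguous translates of each other: if $C_1,C_2$ are cycles of $G(n,k)$, then after possibly interchanging $C_1$ and $C_2$ there is an integer $d\ge0$ such that $C_2=C_1+d$ and $C_1+\alpha$ is a cycle of $G(n,k)$ for every integer $0\le\alpha\le d$. In particular, all cycles of $G(n,k)$ have the same length.
   Context: For an integer $\ell$, $\ell_k$ and $\ell_{k+1}$ denote the least nonnegative residues of $\ell$ modulo $k$ and $k+1$. $G(n,k)$ is the directed graph on vertices $0,1,\dots,k$ whose edges are exactly the $k$ edges $(i+n-2)_{k+1}\to(i+n-1)_k$, $1\le i\le k$; an edge $a\to a$ is a loop, counted as a cycle of length $1$. Every vertex other than $k$ and $(n-2)_{k+1}$ has in- and out-degree $1$, so $G(n,k)$ is a disjoint union of directed cycles together with one directed path (the tail) from $k$ to $(n-2)_{k+1}$. For a cycle $C: a_1\to\cdots\to a_\ell\to a_1$ and an integer $t$, $C+t$ denotes the closed walk $(a_1+t)_{k+1}\to\cdots\to(a_\ell+t)_{k+1}\to(a_1+t)_{k+1}$, and one says "$C+t$ is a cycle" when this is a cycle of $G(n,k)$. The length of a cycle is its number of edges. *)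

theory Defs
  imports Main
begin

definition G_edge :: "int \<Rightarrow> int \<Rightarrow> int \<Rightarrow> int \<Rightarrow> bool" where
  "G_edge n k a b \<longleftrightarrow> (\<exists>i\<in>{1..k}. a = (i + n - 2) mod (k + 1) \<and> b = (i + n - 1) mod k)"

text \<open>A cycle a_1 -> ... -> a_l -> a_1 of G(n,k), given as the list [a_1,...,a_l]
  of distinct vertices (a loop is the case l = 1).\<close>
definition G_cycle :: "int \<Rightarrow> int \<Rightarrow> int list \<Rightarrow> bool" where
  "G_cycle n k cs \<longleftrightarrow> cs \<noteq> [] \<and> distinct cs \<and> set cs \<subseteq> {0..k} \<and>
     (\<forall>j < length cs. G_edge n k (cs ! j) (cs ! ((j + 1) mod length cs)))"

definition cyc_shift :: "int \<Rightarrow> int \<Rightarrow> int list \<Rightarrow> int list" where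
  "cyc_shift k t cs = map (\<lambda>a. (a + t) mod (k + 1)) cs"

definition same_cycle :: "int list \<Rightarrow> int list \<Rightarrow> bool" where
  "same_cycle C D \<longleftrightarrow> (\<exists>r. D = rotate r C)"

end

theory Submission
  imports Defs
begin

text \<open>Translation a \<mapsto> (a + 1) mod (k + 1) maps an edge a \<rightarrow> b of G(n,k) to an edge unless
  a = (n - 3) mod (k + 1), whose translate is the sink, or b = k - 1, whose successor modulo k
  wraps to 0. Hence a cycle can be translated step by step, through cycles, until it first
  meets one of these two blocking vertices. All cycles meeting them coincide: a cycle through
  k - 1 avoiding (n - 3) mod (k + 1) would translate into a path from k to 0, and since the tail
  starting at k is then closed under translation it would climb through 0, 1, \<dots>, k - 1 and
  reach that cycle, which a tail cannot do. So two cycles are translated to the same cycle, and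
  the one needing more steps has the other as a contiguous translate.\<close>

abbreviation vertex_succ :: "int \<Rightarrow> int \<Rightarrow> int" where
  "vertex_succ k a \<equiv> (a + 1) mod (k + 1)"

text \<open>The vertex whose translate is the sink (n-2) mod (k+1); edges out of it do not translate.\<close>
abbreviation pre_sink :: "int \<Rightarrow> int \<Rightarrow> int" where
  "pre_sink n k \<equiv> (n - 3) mod (k + 1)"

lemma mod_add_right_inj:
  fixes i j c m :: int
  assumes "(i + c) mod m = (j + c) mod m" "0 \<le> i" "i < m" "0 \<le> j" "j < m"
  shows "i = j"
proof -
  have "i mod m = j mod m"
    using assms(1) by (metis add_diff_cancel_right' mod_diff_left_eq)
  then show ?thesis
    using assms(2-) by simp
qed

lemma distinct_nth_mod_return:
  assumes "distinct xs" "i < length xs" "xs ! ((i + t) mod length xs) = xs ! i"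
  shows "length xs dvd t"
proof -
  have "(i + t) mod length xs < length xs"
    using assms(2) by (intro mod_less_divisor) auto
  then have "(i + t) mod length xs = i"
    using assms by (simp add: nth_eq_iff_index_eq)
  then show ?thesis
    by (metis dvd_minus_mod nat_diff_split)
qed

lemma G_edge_range: "G_edge n k a b \<Longrightarrow> 0 \<le> a \<and> a \<le> k \<and> 0 \<le> b \<and> b < k"
  unfolding G_edge_def
proof (elim bexE conjE)
  fix i assume "i \<in> {1..k}" "a = (i + n - 2) mod (k + 1)" "b = (i + n - 1) mod k"
  moreover have "(i + n - 2) mod (k + 1) < k + 1"
    using \<open>i \<in> {1..k}\<close> by (intro pos_mod_bound) auto
  ultimately show ?thesis
    by auto
qed

lemma G_edge_functional: "G_edge n k a b \<Longrightarrow> G_edge n k a b' \<Longrightarrow> b = b'"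
  unfolding G_edge_def
proof (elim bexE conjE)
  fix i i' assume i: "i \<in> {1..k}" "a = (i + n - 2) mod (k + 1)" "b = (i + n - 1) mod k"
    and i': "i' \<in> {1..k}" "a = (i' + n - 2) mod (k + 1)" "b' = (i' + n - 1) mod k"
  have "i - 1 = i' - 1"
    by (rule mod_add_right_inj[where c = "n - 1" and m = "k + 1"]) (use i i' in \<open>auto simp: algebra_simps\<close>)
  then show "b = b'"
    using i i' by simp
qed

lemma G_edge_injective: "G_edge n k a b \<Longrightarrow> G_edge n k a' b \<Longrightarrow> a = a'"
  unfolding G_edge_def
proof (elim bexE conjE)
  fix i i' assume i: "i \<in> {1..k}" "a = (i + n - 2) mod (k + 1)" "b = (i + n - 1) mod k"
    and i': "i' \<in> {1..k}" "a' = (i' + n - 2) mod (k + 1)" "b = (i' + n - 1) mod k"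
  have "i - 1 = i' - 1"
    by (rule mod_add_right_inj[where c = n and m = k]) (use i i' in \<open>auto simp: algebra_simps\<close>)
  then show "a = a'"
    using i i' by simp
qed

lemma G_edge_translate:
  assumes "G_edge n k a b" "a \<noteq> pre_sink n k"
  shows "G_edge n k (vertex_succ k a) ((b + 1) mod k)"
proof -
  obtain i where i: "i \<in> {1..k}" "a = (i + n - 2) mod (k + 1)" "b = (i + n - 1) mod k"
    using assms(1) unfolding G_edge_def by blast
  have "k + n - 2 = (n - 3) + (k + 1)"
    by simp
  then have "(k + n - 2) mod (k + 1) = pre_sink n k"
    by (metis mod_add_self2)
  then have "i \<noteq> k"
    using assms(2) i(2) by auto
  then have "i + 1 \<in> {1..k}"
    using i(1) by auto
  moreover have "vertex_succ k a = (i + 1 + n - 2) mod (k + 1)"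
    unfolding i(2) mod_add_left_eq by (simp add: algebra_simps)
  moreover have "(b + 1) mod k = (i + 1 + n - 1) mod k"
    unfolding i(3) mod_add_left_eq by (simp add: algebra_simps)
  ultimately show ?thesis
    unfolding G_edge_def by blast
qed

lemma G_edge_translate_succ:
  assumes "G_edge n k a b" "a \<noteq> pre_sink n k" "b \<noteq> k - 1"
  shows "G_edge n k (vertex_succ k a) (vertex_succ k b)"
proof -
  have "0 \<le> b" "b + 1 < k"
    using G_edge_range[OF assms(1)] assms(3) by auto
  then have "(b + 1) mod k = vertex_succ k b"
    by simp
  then show ?thesis
    using G_edge_translate[OF assms(1,2)] by simp
qed

lemma G_cycle_edge:
  "G_cycle n k C \<Longrightarrow> j < length C \<Longrightarrow> G_edge n k (C ! j) (C ! ((j + 1) mod length C))"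
  unfolding G_cycle_def by blast

lemma G_cycle_k_pos: "G_cycle n k C \<Longrightarrow> 1 \<le> k"
  using G_cycle_edge[of n k C 0] G_edge_range unfolding G_cycle_def by fastforce

lemma G_cycle_range: "G_cycle n k C \<Longrightarrow> x \<in> set C \<Longrightarrow> 0 \<le> x \<and> x \<le> k"
  unfolding G_cycle_def by auto

lemma G_cycle_pred_ex:
  assumes C: "G_cycle n k C" and x: "x \<in> set C"
  shows "\<exists>y \<in> set C. G_edge n k y x"
proof -
  obtain j where j: "j < length C" "C ! j = x"
    using x by (auto simp: in_set_conv_nth)
  define p where "p = (j + (length C - 1)) mod length C"
  have p: "p < length C"
    using j(1) unfolding p_def by (intro mod_less_divisor) auto
  have "j + (length C - 1) + 1 = j + length C"
    using j(1) by simp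
  then have "(p + 1) mod length C = j"
    using j(1) unfolding p_def by (metis mod_add_left_eq mod_add_self2 mod_less)
  then have "G_edge n k (C ! p) x"
    using G_cycle_edge[OF C p] j by simp
  then show ?thesis
    using p by auto
qed

lemma G_cycle_pred_mem:
  "G_cycle n k C \<Longrightarrow> x \<in> set C \<Longrightarrow> G_edge n k y x \<Longrightarrow> y \<in> set C"
  using G_cycle_pred_ex G_edge_injective by metis

lemma G_cycle_closed_backwards:
  "(G_edge n k)\<^sup>*\<^sup>* y x \<Longrightarrow> G_cycle n k C \<Longrightarrow> x \<in> set C \<Longrightarrow> y \<in> set C"
  by (induction rule: rtranclp_induct) (auto intro: G_cycle_pred_mem)

text \<open>The vertex k has no incoming edge, so it lies on the tail, which never meets a cycle.\<close>
lemma G_cycle_not_reachable_from_k: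
  assumes "G_cycle n k C" "x \<in> set C"
  shows "\<not> (G_edge n k)\<^sup>*\<^sup>* k x"
proof
  assume "(G_edge n k)\<^sup>*\<^sup>* k x"
  then have "k \<in> set C"
    using G_cycle_closed_backwards assms by blast
  then obtain y where "G_edge n k y k"
    using G_cycle_pred_ex[OF assms(1)] by blast
  then show False
    using G_edge_range by fastforce
qed

lemma G_cycle_walk:
  assumes C: "G_cycle n k C" and x: "x \<in> set C" and "P x"
    and step: "\<And>a b. a \<in> set C \<Longrightarrow> G_edge n k a b \<Longrightarrow> b \<noteq> x \<Longrightarrow> P a \<Longrightarrow> P b"
  shows "\<forall>y \<in> set C. P y"
proof -
  define L where "L = length C"
  obtain i where i: "i < L" "C ! i = x"
    using x unfolding L_def by (auto simp: in_set_conv_nth)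
  have dist: "distinct C"
    using C unfolding G_cycle_def by blast
  have walk: "P (C ! ((i + j) mod L))" if "j < L" for j
    using that
  proof (induction j)
    case 0
    then show ?case
      using i \<open>P x\<close> by simp
  next
    case (Suc j)
    have pos: "(i + j) mod L < L"
      using Suc.prems by (intro mod_less_divisor) auto
    have edge: "G_edge n k (C ! ((i + j) mod L)) (C ! ((i + Suc j) mod L))"
      using G_cycle_edge[OF C pos[unfolded L_def]] by (simp add: L_def mod_Suc_eq)
    have "C ! ((i + Suc j) mod L) \<noteq> x"
    proof
      assume "C ! ((i + Suc j) mod L) = x"
      then have "L dvd Suc j"
        using distinct_nth_mod_return[OF dist, of i "Suc j"] i unfolding L_def by simp
      then show False
        using Suc.prems by (simp add: nat_dvd_not_less)
    qed
    then show ?case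
      using step[OF _ edge] Suc.IH Suc.prems pos unfolding L_def by simp
  qed
  show ?thesis
  proof
    fix y assume "y \<in> set C"
    then obtain u where u: "u < L" "C ! u = y"
      unfolding L_def by (auto simp: in_set_conv_nth)
    have "i + (u + L - i) = u + L"
      using i(1) by simp
    then have "(i + (u + L - i) mod L) mod L = u"
      using u(1) by (metis mod_add_right_eq mod_add_self2 mod_less)
    then show "P y"
      using walk[of "(u + L - i) mod L"] u(2) i(1) by simp
  qed
qed

lemma G_cycle_follow:
  assumes C1: "G_cycle n k C1" and C2: "G_cycle n k C2"
    and i: "i < length C1" and j: "j < length C2" and eq: "C1 ! i = C2 ! j"
  shows "C2 ! ((j + t) mod length C2) = C1 ! ((i + t) mod length C1)"
proof (induction t)
  case 0
  then show ?case
    using i j eq by simp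
next
  case (Suc t)
  have pos1: "(i + t) mod length C1 < length C1"
    using i by (intro mod_less_divisor) auto
  have pos2: "(j + t) mod length C2 < length C2"
    using j by (intro mod_less_divisor) auto
  show ?case
    using G_edge_functional G_cycle_edge[OF C1 pos1] G_cycle_edge[OF C2 pos2] Suc.IH
    by (metis add_Suc_right mod_Suc_eq Suc_eq_plus1)
qed

lemma G_cycle_rotate:
  assumes C1: "G_cycle n k C1" and C2: "G_cycle n k C2"
    and x1: "x \<in> set C1" and x2: "x \<in> set C2"
  shows "\<exists>r. C2 = rotate r C1"
proof -
  obtain i where i: "i < length C1" "C1 ! i = x"
    using x1 by (auto simp: in_set_conv_nth)
  obtain j where j: "j < length C2" "C2 ! j = x"
    using x2 by (auto simp: in_set_conv_nth)
  have dist: "distinct C1" "distinct C2"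
    using C1 C2 unfolding G_cycle_def by blast+
  have follow: "C2 ! ((j + t) mod length C2) = C1 ! ((i + t) mod length C1)" for t
    using G_cycle_follow[OF C1 C2 i(1) j(1)] i j by simp
  have "C1 ! ((i + length C2) mod length C1) = C1 ! i"
    using follow[of "length C2"] i j by simp
  then have "length C1 dvd length C2"
    by (rule distinct_nth_mod_return[OF dist(1) i(1)])
  moreover have "C2 ! ((j + length C1) mod length C2) = C2 ! j"
    using follow[of "length C1"] i j by simp
  then have "length C2 dvd length C1"
    by (rule distinct_nth_mod_return[OF dist(2) j(1)])
  ultimately have len: "length C1 = length C2"
    by (rule dvd_antisym)
  define r where "r = i + length C1 - j"
  have "C2 = rotate r C1"
  proof (rule nth_equalityI)
    fix u assume u: "u < length C2"
    have "C2 ! u = C2 ! ((j + (u + length C1 - j)) mod length C2)"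
      using u j(1) len by simp
    also have "\<dots> = C1 ! ((i + (u + length C1 - j)) mod length C1)"
      by (rule follow)
    also have "i + (u + length C1 - j) = r + u"
      using j(1) len unfolding r_def by simp
    also have "C1 ! ((r + u) mod length C1) = rotate r C1 ! u"
      using u len by (simp add: nth_rotate)
    finally show "C2 ! u = rotate r C1 ! u" .
  qed (use len in simp)
  then show ?thesis
    by blast
qed

lemma cyc_shift_add: "cyc_shift k a (cyc_shift k b C) = cyc_shift k (b + a) C"
  unfolding cyc_shift_def by (simp add: mod_add_left_eq add.assoc)

lemma cyc_shift_0: "G_cycle n k C \<Longrightarrow> cyc_shift k 0 C = C"
  unfolding cyc_shift_def by (rule map_idI) (simp add: G_cycle_range)

definition shift_blocked :: "int \<Rightarrow> int \<Rightarrow> int list \<Rightarrow> bool" where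
  "shift_blocked n k C \<longleftrightarrow> pre_sink n k \<in> set C \<or> k - 1 \<in> set C"

lemma G_cycle_cyc_shift_1:
  assumes C: "G_cycle n k C" and unblocked: "\<not> shift_blocked n k C"
  shows "G_cycle n k (cyc_shift k 1 C)"
proof -
  have shift: "cyc_shift k 1 C = map (vertex_succ k) C"
    unfolding cyc_shift_def ..
  have k: "1 \<le> k"
    using G_cycle_k_pos[OF C] .
  have "inj_on (vertex_succ k) {0..k}"
    by (rule inj_onI) (auto intro: mod_add_right_inj)
  then have "distinct (map (vertex_succ k) C)"
    using C unfolding G_cycle_def by (auto simp: distinct_map intro: inj_on_subset)
  moreover have "vertex_succ k a \<in> {0..k}" for a
    using k pos_mod_bound[of "k + 1" "a + 1"] pos_mod_sign[of "k + 1" "a + 1"] by simp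
  then have "set (map (vertex_succ k) C) \<subseteq> {0..k}"
    by auto
  moreover have "G_edge n k (map (vertex_succ k) C ! j) (map (vertex_succ k) C ! ((j + 1) mod length C))"
    if j: "j < length C" for j
  proof -
    have next_pos: "(j + 1) mod length C < length C"
      using j by (intro mod_less_divisor) auto
    have "G_edge n k (vertex_succ k (C ! j)) (vertex_succ k (C ! ((j + 1) mod length C)))"
      using G_edge_translate_succ[OF G_cycle_edge[OF C j]] unblocked j next_pos
      unfolding shift_blocked_def by (metis nth_mem)
    then show ?thesis
      using j next_pos by simp
  qed
  ultimately show ?thesis
    using C unfolding shift G_cycle_def by auto
qed

lemma tail_translate_path:
  assumes pre_sink: "\<not> (G_edge n k)\<^sup>*\<^sup>* k (pre_sink n k)"
    and last: "\<not> (G_edge n k)\<^sup>*\<^sup>* k (k - 1)"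
    and x: "(G_edge n k)\<^sup>*\<^sup>* k x" and xy: "(G_edge n k)\<^sup>*\<^sup>* x y"
  shows "(G_edge n k)\<^sup>*\<^sup>* (vertex_succ k x) (vertex_succ k y)"
  using xy
proof (induction rule: rtranclp_induct)
  case (step y z)
  have "(G_edge n k)\<^sup>*\<^sup>* k y"
    using x step.hyps(1) by simp
  moreover have "(G_edge n k)\<^sup>*\<^sup>* k z"
    using calculation step.hyps(2) by simp
  ultimately have "G_edge n k (vertex_succ k y) (vertex_succ k z)"
    using G_edge_translate_succ[OF step.hyps(2)] pre_sink last by metis
  with step.IH show ?case
    by simp
qed simp

lemma funpow_vertex_succ:
  "0 \<le> a \<Longrightarrow> a \<le> k \<Longrightarrow> (vertex_succ k ^^ m) a = (a + int m) mod (k + 1)"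
  by (induction m) (simp_all add: mod_simps ac_simps)

lemma tail_reaches_translates:
  assumes pre_sink: "\<not> (G_edge n k)\<^sup>*\<^sup>* k (pre_sink n k)"
    and last: "\<not> (G_edge n k)\<^sup>*\<^sup>* k (k - 1)"
    and succ_k: "(G_edge n k)\<^sup>*\<^sup>* k (vertex_succ k k)"
  shows "(G_edge n k)\<^sup>*\<^sup>* k ((vertex_succ k ^^ m) k)"
proof -
  have "(G_edge n k)\<^sup>*\<^sup>* k ((vertex_succ k ^^ m) k) \<and>
    (G_edge n k)\<^sup>*\<^sup>* ((vertex_succ k ^^ m) k) ((vertex_succ k ^^ Suc m) k)"
  proof (induction m)
    case 0
    then show ?case
      using succ_k by simp
  next
    case (Suc m)
    then show ?case
      using tail_translate_path[OF pre_sink last] by fastforce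
  qed
  then show ?thesis ..
qed

lemma pre_sink_on_cycle_through_k_minus_1:
  assumes D1: "G_cycle n k D1" and D2: "G_cycle n k D2"
    and last: "k - 1 \<in> set D1" and pre_sink: "pre_sink n k \<in> set D2"
  shows "pre_sink n k \<in> set D1"
proof (rule ccontr)
  assume off_D1: "pre_sink n k \<notin> set D1"
  let ?E = "G_edge n k"
  have k: "1 \<le> k"
    using G_cycle_k_pos[OF D1] .
  have no_last: "\<not> ?E\<^sup>*\<^sup>* k (k - 1)"
    using G_cycle_not_reachable_from_k[OF D1 last] .
  have "\<forall>y \<in> set D1. ?E\<^sup>*\<^sup>* k (vertex_succ k y)"
  proof (rule G_cycle_walk[OF D1 last])
    show "?E\<^sup>*\<^sup>* k (vertex_succ k (k - 1))"
      using k by simp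
  next
    fix a b assume "a \<in> set D1" "?E a b" "b \<noteq> k - 1" "?E\<^sup>*\<^sup>* k (vertex_succ k a)"
    then show "?E\<^sup>*\<^sup>* k (vertex_succ k b)"
      using G_edge_translate_succ off_D1 by (metis rtranclp.rtrancl_into_rtrancl)
  qed
  moreover obtain q where q: "q \<in> set D1" "?E q (k - 1)"
    using G_cycle_pred_ex[OF D1 last] by blast
  moreover have "?E (vertex_succ k q) (vertex_succ k k)"
    using G_edge_translate[OF q(2)] q(1) off_D1 by fastforce
  ultimately have "?E\<^sup>*\<^sup>* k (vertex_succ k k)"
    by (meson rtranclp.rtrancl_into_rtrancl)
  then have "?E\<^sup>*\<^sup>* k ((vertex_succ k ^^ nat k) k)"
    using tail_reaches_translates G_cycle_not_reachable_from_k[OF D2 pre_sink] no_last by blast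
  moreover have "(vertex_succ k ^^ nat k) k = k - 1"
  proof -
    have "k + int (nat k) = (k - 1) + (k + 1)"
      using k by simp
    then have "(k + int (nat k)) mod (k + 1) = k - 1"
      by (simp only: mod_add_self2) (use k in simp)
    then show ?thesis
      using k funpow_vertex_succ[of k k "nat k"] by simp
  qed
  ultimately show False
    using no_last by simp
qed

lemma G_cycle_translates_until_blocked:
  assumes C: "G_cycle n k C"
  shows "\<exists>e::nat. (\<forall>\<alpha>\<le>e. G_cycle n k (cyc_shift k (int \<alpha>) C)) \<and>
    shift_blocked n k (cyc_shift k (int e) C)"
proof -
  let ?P = "\<lambda>e::nat. shift_blocked n k (cyc_shift k (int e) C)"
  obtain x where x: "x \<in> set C"
    using C unfolding G_cycle_def by fastforce
  have k: "1 \<le> k" and "0 \<le> x" "x \<le> k"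
    using G_cycle_k_pos[OF C] G_cycle_range[OF C x] by auto
  then have "(x + int (nat ((k - 1 - x) mod (k + 1)))) mod (k + 1) = k - 1"
    by (simp add: mod_add_right_eq)
  then have "?P (nat ((k - 1 - x) mod (k + 1)))"
    using x unfolding shift_blocked_def cyc_shift_def by force
  then have blocked: "?P (LEAST e. ?P e)"
    by (rule LeastI)
  have "G_cycle n k (cyc_shift k (int \<alpha>) C)" if "\<alpha> \<le> (LEAST e. ?P e)" for \<alpha>
    using that
  proof (induction \<alpha>)
    case 0
    then show ?case
      using C cyc_shift_0 by simp
  next
    case (Suc \<alpha>)
    then have "\<not> ?P \<alpha>"
      using not_less_Least by (metis Suc_le_eq)
    then have "G_cycle n k (cyc_shift k 1 (cyc_shift k (int \<alpha>) C))"
      using G_cycle_cyc_shift_1 Suc by simp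
    then show ?case
      by (simp add: cyc_shift_add add.commute)
  qed
  then show ?thesis
    using blocked by blast
qed

lemma shift_blocked_cycles_meet:
  assumes "G_cycle n k D1" "G_cycle n k D2" "shift_blocked n k D1" "shift_blocked n k D2"
  shows "\<exists>x. x \<in> set D1 \<and> x \<in> set D2"
  using assms pre_sink_on_cycle_through_k_minus_1 unfolding shift_blocked_def by metis

lemma contiguous_translates_of_common_translate:
  assumes C2: "G_cycle n k C2" and le: "e2 \<le> e1"
    and translates: "\<forall>\<alpha>\<le>e1. G_cycle n k (cyc_shift k (int \<alpha>) C1)"
    and rot: "cyc_shift k (int e2) C2 = rotate r (cyc_shift k (int e1) C1)"
  shows "\<exists>d::int. d \<ge> 0 \<and> same_cycle (cyc_shift k d C1) C2 \<and>
      (\<forall>\<alpha>::int. 0 \<le> \<alpha> \<and> \<alpha> \<le> d \<longrightarrow> G_cycle n k (cyc_shift k \<alpha> C1))"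
    and "length C1 = length C2"
proof -
  have "C2 = cyc_shift k (- int e2) (cyc_shift k (int e2) C2)"
    using cyc_shift_0[OF C2] by (simp add: cyc_shift_add)
  also have "\<dots> = cyc_shift k (- int e2) (rotate r (cyc_shift k (int e1) C1))"
    by (simp only: rot)
  also have "\<dots> = rotate r (cyc_shift k (- int e2) (cyc_shift k (int e1) C1))"
    unfolding cyc_shift_def by (simp only: rotate_map)
  also have "\<dots> = rotate r (cyc_shift k (int (e1 - e2)) C1)"
    using le by (simp add: cyc_shift_add of_nat_diff)
  finally have C2_eq: "C2 = rotate r (cyc_shift k (int (e1 - e2)) C1)" .
  then show "length C1 = length C2"
    unfolding cyc_shift_def by simp
  have "G_cycle n k (cyc_shift k \<alpha> C1)" if "0 \<le> \<alpha>" "\<alpha> \<le> int (e1 - e2)" for \<alpha>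
    using translates[rule_format, of "nat \<alpha>"] that by simp
  then show "\<exists>d::int. d \<ge> 0 \<and> same_cycle (cyc_shift k d C1) C2 \<and>
      (\<forall>\<alpha>::int. 0 \<le> \<alpha> \<and> \<alpha> \<le> d \<longrightarrow> G_cycle n k (cyc_shift k \<alpha> C1))"
    using C2_eq unfolding same_cycle_def by (intro exI[of _ "int (e1 - e2)"]) auto
qed

theorem theorem3p9:
  fixes n k :: int and C1 C2 :: "int list"
  assumes "k \<ge> 1" and "G_cycle n k C1" and "G_cycle n k C2"
  shows "(\<exists>A B. ((A = C1 \<and> B = C2) \<or> (A = C2 \<and> B = C1)) \<and>
            (\<exists>d::int. d \<ge> 0 \<and> same_cycle (cyc_shift k d A) B \<and>
               (\<forall>\<alpha>::int. 0 \<le> \<alpha> \<and> \<alpha> \<le> d \<longrightarrow> G_cycle n k (cyc_shift k \<alpha> A))))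
         \<and> length C1 = length C2"
proof -
  obtain e1 where translates1: "\<forall>\<alpha>\<le>e1. G_cycle n k (cyc_shift k (int \<alpha>) C1)"
    and blocked1: "shift_blocked n k (cyc_shift k (int e1) C1)"
    using G_cycle_translates_until_blocked[OF assms(2)] by blast
  obtain e2 where translates2: "\<forall>\<alpha>\<le>e2. G_cycle n k (cyc_shift k (int \<alpha>) C2)"
    and blocked2: "shift_blocked n k (cyc_shift k (int e2) C2)"
    using G_cycle_translates_until_blocked[OF assms(3)] by blast
  let ?T1 = "cyc_shift k (int e1) C1" and ?T2 = "cyc_shift k (int e2) C2"
  have T1: "G_cycle n k ?T1" and T2: "G_cycle n k ?T2"
    using translates1 translates2 by blast+
  then obtain x where "x \<in> set ?T1" "x \<in> set ?T2"
    using shift_blocked_cycles_meet blocked1 blocked2 by blast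
  then obtain r r' where "?T2 = rotate r ?T1" "?T1 = rotate r' ?T2"
    using G_cycle_rotate[OF T1 T2] G_cycle_rotate[OF T2 T1] by metis
  then show ?thesis
    using contiguous_translates_of_common_translate[OF assms(3) _ translates1]
      contiguous_translates_of_common_translate[OF assms(2) _ translates2]
    by (metis nat_le_linear)
qed

end
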